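(* Let $D$ be a Dyck path of semilength $n$, let $\mathcal N$ be the set of $k\in\{1,\dots,n\}$ such that row $k$ contains no valley of $D$, and let $\pi$ be the permutation associated with $D$ by the Billey–Jockusch–Stanley bijection. Then $k\in\mathcal N$ if and only if $\pi^{-1}(k)\ge k$, i.e. if and only if $\pi^{-1}(k)$ is a fixpoint or a deficiency of $\pi$.
   Context: Work in an $n\times n$ array of unit cells; the cell $(i,j)$ is the one in column $i$ (columns numbered $1,\dots,n$ from left to right) and row $j$ (rows numbered $1,\dots,n$ from bottom to top), i.e. the square $[i-1,i]\times[j-1,j]$. A Dyck path of semilength $n$ is a lattice path from $(0,0)$ to $(n,n)$ with unit north and east steps that never goes below the line $y=x$. A valley of $D$ is an east step immediately followed by a north step; if the east step is the $k$-th east step and the north step is the $\ell$-th north step, the valley is at position $(k,\ell)$, the cell enclosed by these two steps (it lies in row $\ell$). Billey–Jockusch–Stanley bijection: put a cross in every valley cell of $D$; then, for the columns $i=1,2,\dots,n$ in this order, if column $i$ does not yet contain a cross, put a cross in the lowest cell of column $i$ whose row does not yet contain a cross. The crosses form a permutation matrix, and $\pi(i)$ is the row of the cross in column $i$. An index $m$ is a fixpoint of $\pi$ if $\pi(m)=m$ and a deficiency if $\pi(m)<m$. *)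

theory Defs
  imports Main
begin

text \<open>A lattice path is a list of steps: True = north step, False = east step.\<close>

definition n_north :: "bool list \<Rightarrow> nat" where
  "n_north xs = length (filter (\<lambda>s. s) xs)"

definition n_east :: "bool list \<Rightarrow> nat" where
  "n_east xs = length (filter (\<lambda>s. \<not> s) xs)"

definition dyck :: "nat \<Rightarrow> bool list \<Rightarrow> bool" where
  "dyck n w \<longleftrightarrow> length w = 2 * n \<and> n_north w = n \<and> n_east w = n \<and>
     (\<forall>i \<le> length w. n_east (take i w) \<le> n_north (take i w))"

text \<open>Valleys: an east step (index i) immediately followed by a north step (index i+1);
  position (k,l): k = index of that east step among east steps, l = index of the
  north step among north steps (both 1-based).\<close>
definition valleys :: "bool list \<Rightarrow> (nat \<times> nat) set" where
  "valleys w = {(n_east (take (i + 1) w), n_north (take (i + 2) w)) | i.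
                 i + 1 < length w \<and> \<not> w ! i \<and> w ! (i + 1)}"

text \<open>Billey--Jockusch--Stanley: crosses in valley cells; then, column by column,
  a column without a cross gets a cross in the lowest row (among 1..n) not yet containing
  a cross.  bjs_aux V n i gives the rows of the crosses of columns 1..i.\<close>
fun bjs_aux :: "(nat \<times> nat) set \<Rightarrow> nat \<Rightarrow> nat \<Rightarrow> nat \<Rightarrow> nat" where
  "bjs_aux V n 0 = (\<lambda>_. 0)"
| "bjs_aux V n (Suc i) =
     (let p = bjs_aux V n i in
      if \<exists>r. (Suc i, r) \<in> V then p(Suc i := (THE r. (Suc i, r) \<in> V))
      else p(Suc i := (LEAST r. 1 \<le> r \<and> r \<le> n \<and> r \<notin> snd ` V \<and> r \<notin> p ` {1..i})))"

definition bjs :: "nat \<Rightarrow> bool list \<Rightarrow> nat \<Rightarrow> nat" where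
  "bjs n w = bjs_aux (valleys w) n n"

definition no_valley_rows :: "nat \<Rightarrow> bool list \<Rightarrow> nat set" where
  "no_valley_rows n w = {k \<in> {1..n}. \<not> (\<exists>c. (c, k) \<in> valleys w)}"

definition fixpoint :: "(nat \<Rightarrow> nat) \<Rightarrow> nat \<Rightarrow> bool" where
  "fixpoint p m \<longleftrightarrow> p m = m"

definition deficiency :: "(nat \<Rightarrow> nat) \<Rightarrow> nat \<Rightarrow> bool" where
  "deficiency p m \<longleftrightarrow> p m < m"

end

theory Submission
  imports Defs
begin

text \<open>The valley cells form a partial matching between columns and rows lying strictly above the
  diagonal.  For any such matching the BJS construction keeps the invariant that a valley column
  carries its valley cross, while every other column i receives a cross in a row \<open>\<le> i\<close> that
  contains no valley: a free row \<open>\<le> i\<close> always exists, because the valley rows \<open>\<le> i\<close> are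
  injectively matched to valley columns \<open>< i\<close>.  Hence the cross in row k sits in a column
  \<open>\<ge> k\<close> exactly when row k contains no valley, since a valley in row k lies in a column \<open>< k\<close>.\<close>

lemma n_east_append [simp]: "n_east (xs @ ys) = n_east xs + n_east ys"
  by (simp add: n_east_def)

lemma n_north_append [simp]: "n_north (xs @ ys) = n_north xs + n_north ys"
  by (simp add: n_north_def)

lemma n_east_take_mono: "j \<le> j' \<Longrightarrow> n_east (take j w) \<le> n_east (take j' w)"
  by (metis le_add_diff_inverse le_add1 n_east_append take_add)

lemma n_north_take_mono: "j \<le> j' \<Longrightarrow> n_north (take j w) \<le> n_north (take j' w)"
  by (metis le_add_diff_inverse le_add1 n_north_append take_add)

lemma n_east_take_Suc:
  "j < length w \<Longrightarrow> n_east (take (Suc j) w) = n_east (take j w) + (if w ! j then 0 else 1)"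
  by (simp add: take_Suc_conv_app_nth n_east_def)

lemma n_north_take_Suc:
  "j < length w \<Longrightarrow> n_north (take (Suc j) w) = n_north (take j w) + (if w ! j then 1 else 0)"
  by (simp add: take_Suc_conv_app_nth n_north_def)

definition is_valley :: "bool list \<Rightarrow> nat \<Rightarrow> bool" where
  "is_valley w i \<longleftrightarrow> i + 1 < length w \<and> \<not> w ! i \<and> w ! (i + 1)"

definition valley_cell :: "bool list \<Rightarrow> nat \<Rightarrow> nat \<times> nat" where
  "valley_cell w i = (n_east (take (i + 1) w), n_north (take (i + 2) w))"

lemma valleys_eq_image: "valleys w = valley_cell w ` {i. is_valley w i}"
  unfolding valleys_def valley_cell_def is_valley_def by blast

lemma valley_cell_strict_mono:
  assumes "is_valley w i" "is_valley w i'" "i < i'"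
  shows "fst (valley_cell w i) < fst (valley_cell w i') \<and>
         snd (valley_cell w i) < snd (valley_cell w i')"
proof -
  have "n_east (take (i + 1) w) \<le> n_east (take i' w)"
    and "n_north (take (i + 2) w) \<le> n_north (take (i' + 1) w)"
    using assms(3) by (auto intro: n_east_take_mono n_north_take_mono)
  then show ?thesis
    using assms n_east_take_Suc[of i' w] n_north_take_Suc[of "i' + 1" w]
    by (simp add: valley_cell_def is_valley_def)
qed

lemma valley_cell_inj:
  assumes "is_valley w i" "is_valley w i'"
    and "fst (valley_cell w i) = fst (valley_cell w i') \<or>
         snd (valley_cell w i) = snd (valley_cell w i')"
  shows "i = i'"
  using valley_cell_strict_mono[OF assms(1,2)] valley_cell_strict_mono[OF assms(2,1)] assms(3)
  by (metis less_irrefl nat_neq_iff)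

lemma valley_cell_bounds:
  assumes "dyck n w" "is_valley w i"
  shows "1 \<le> fst (valley_cell w i) \<and> fst (valley_cell w i) < snd (valley_cell w i) \<and>
         snd (valley_cell w i) \<le> n"
proof -
  have i: "i + 1 < length w" "\<not> w ! i" "w ! (i + 1)"
    using assms(2) by (auto simp: is_valley_def)
  have "n_east (take (i + 1) w) \<le> n_north (take (i + 1) w)"
    using assms(1) i(1) by (simp add: dyck_def)
  moreover have "n_north (take (i + 2) w) \<le> n_north (take (length w) w)"
    using i(1) by (intro n_north_take_mono) simp
  ultimately show ?thesis
    using assms(1) i n_east_take_Suc[of i w] n_north_take_Suc[of "i + 1" w]
    by (simp add: valley_cell_def dyck_def)
qed

locale valley_matching =
  fixes n :: nat and V :: "(nat \<times> nat) set"
  assumes cell_bounds: "(c, r) \<in> V \<Longrightarrow> 1 \<le> c \<and> c < r \<and> r \<le> n"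
    and same_column: "(c, r) \<in> V \<Longrightarrow> (c, r') \<in> V \<Longrightarrow> r = r'"
    and same_row: "(c, r) \<in> V \<Longrightarrow> (c', r) \<in> V \<Longrightarrow> c = c'"
begin

definition bjs_invariant :: "nat \<Rightarrow> (nat \<Rightarrow> nat) \<Rightarrow> bool" where
  "bjs_invariant i p \<longleftrightarrow> inj_on p {1..i} \<and> p ` {1..i} \<subseteq> {1..n} \<and>
     (\<forall>c\<in>{1..i}. if c \<in> fst ` V then (c, p c) \<in> V else p c \<notin> snd ` V \<and> p c \<le> c)"

lemma bjs_invariant_column:
  assumes "bjs_invariant i p" "c \<in> {1..i}"
  shows "c \<in> fst ` V \<Longrightarrow> (c, p c) \<in> V"
    and "c \<notin> fst ` V \<Longrightarrow> p c \<notin> snd ` V \<and> p c \<le> c"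
  using assms by (auto simp: bjs_invariant_def)

lemma bjs_invariant_upd:
  assumes "bjs_invariant i p" "v \<in> {1..n}" "v \<notin> p ` {1..i}"
    and "if Suc i \<in> fst ` V then (Suc i, v) \<in> V else v \<notin> snd ` V \<and> v \<le> Suc i"
  shows "bjs_invariant (Suc i) (p(Suc i := v))"
proof -
  have Suc: "{1..Suc i} = insert (Suc i) {1..i}" by auto
  have img: "p(Suc i := v) ` {1..i} = p ` {1..i}" by auto
  have "inj_on (p(Suc i := v)) {1..i} \<longleftrightarrow> inj_on p {1..i}"
    by (rule inj_on_cong) auto
  then have "inj_on (p(Suc i := v)) {1..Suc i}"
    using assms(1,3) img unfolding Suc bjs_invariant_def by (simp only: inj_on_insert) simp
  moreover have "p(Suc i := v) ` {1..Suc i} \<subseteq> {1..n}"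
    using assms(1,2) img unfolding Suc bjs_invariant_def
    by (simp only: image_insert img fun_upd_same insert_subset)
  moreover have "\<forall>c\<in>{1..Suc i}. if c \<in> fst ` V then (c, (p(Suc i := v)) c) \<in> V
                  else (p(Suc i := v)) c \<notin> snd ` V \<and> (p(Suc i := v)) c \<le> c"
    using assms(1,4) unfolding Suc bjs_invariant_def by auto
  ultimately show ?thesis
    unfolding bjs_invariant_def by blast
qed

lemma valley_row_unused:
  assumes "bjs_invariant i p" "(c, r) \<in> V" "i < c"
  shows "r \<notin> p ` {1..i}"
proof
  assume "r \<in> p ` {1..i}"
  then obtain c' where c': "c' \<in> {1..i}" "p c' = r" by auto
  show False
  proof (cases "c' \<in> fst ` V")
    case True
    then have "c' = c"
      using bjs_invariant_column(1)[OF assms(1) c'(1)] c'(2) assms(2) same_row by auto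
    with c' assms(3) show False by simp
  next
    case False
    then show False using bjs_invariant_column(2)[OF assms(1) c'(1)] c'(2) assms(2) by force
  qed
qed

lemma card_valley_rows_le:
  "card ({1..Suc i} \<inter> snd ` V) \<le> card ({1..i} \<inter> fst ` V)"
proof -
  define W where "W = {x \<in> V. snd x \<le> Suc i}"
  have "W \<subseteq> {1..n} \<times> {1..n}" using cell_bounds by (force simp: W_def)
  then have "finite W" by (rule finite_subset) simp
  have "snd ` W = {1..Suc i} \<inter> snd ` V" using cell_bounds by (force simp: W_def)
  moreover have "fst ` W \<subseteq> {1..i} \<inter> fst ` V" using cell_bounds by (force simp: W_def)
  moreover have "inj_on fst W" using same_column by (auto simp: W_def inj_on_def)
  ultimately show ?thesis
    using card_image_le[OF \<open>finite W\<close>, of snd] card_image[of fst W]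
      card_mono[of "{1..i} \<inter> fst ` V" "fst ` W"] by simp
qed

text \<open>The rows \<open>\<le> i+1\<close> without a valley outnumber the non-valley columns \<open>\<le> i\<close>, whose
  crosses all lie among them.\<close>
lemma free_row_exists:
  assumes inv: "bjs_invariant i p" and "Suc i \<notin> fst ` V"
  shows "\<exists>r. 1 \<le> r \<and> r \<le> Suc i \<and> r \<notin> snd ` V \<and> r \<notin> p ` {1..i}"
proof -
  define A where "A = {1..Suc i} - snd ` V"
  define B where "B = p ` ({1..i} - fst ` V)"
  have "card B = card ({1..i} - fst ` V)"
    using inv by (auto simp: B_def bjs_invariant_def intro: card_image inj_on_subset)
  also have "\<dots> = i - card ({1..i} \<inter> fst ` V)"
    by (simp add: card_Diff_subset_Int)
  also have "\<dots> < Suc i - card ({1..Suc i} \<inter> snd ` V)"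
    using card_valley_rows_le[of i] card_mono[of "{1..i}" "{1..i} \<inter> fst ` V"] by simp
  also have "\<dots> = card A"
    by (simp add: A_def card_Diff_subset_Int)
  finally have "\<not> A \<subseteq> B"
    using card_mono[of B A] by (force simp: B_def)
  then obtain r where r: "r \<in> A" "r \<notin> B" by blast
  have "r \<notin> p ` {1..i}"
  proof
    assume "r \<in> p ` {1..i}"
    then obtain c where c: "c \<in> {1..i}" "p c = r" by auto
    show False
      using bjs_invariant_column(1)[OF inv c(1)] c r
      by (cases "c \<in> fst ` V") (force simp: A_def B_def)+
  qed
  with r show ?thesis by (auto simp: A_def)
qed

lemma bjs_aux_invariant: "i \<le> n \<Longrightarrow> bjs_invariant i (bjs_aux V n i)"
proof (induction i)
  case 0
  show ?case by (simp add: bjs_invariant_def)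
next
  case (Suc i)
  define p where "p = bjs_aux V n i"
  have inv: "bjs_invariant i p" and "i < n" using Suc by (auto simp: p_def)
  show ?case
  proof (cases "Suc i \<in> fst ` V")
    case True
    then obtain r where r: "(Suc i, r) \<in> V" by force
    then have "(THE r. (Suc i, r) \<in> V) = r" using same_column by blast
    then have "bjs_aux V n (Suc i) = p(Suc i := r)" using r by (auto simp: p_def Let_def)
    moreover have "bjs_invariant (Suc i) (p(Suc i := r))"
      using bjs_invariant_upd[OF inv _ valley_row_unused[OF inv r]] cell_bounds[OF r] r True by simp
    ultimately show ?thesis by (simp only:)
  next
    case False
    define P where "P = (\<lambda>r. 1 \<le> r \<and> r \<le> n \<and> r \<notin> snd ` V \<and> r \<notin> p ` {1..i})"
    obtain r where "P r" "r \<le> Suc i"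
      using free_row_exists[OF inv False] \<open>i < n\<close> by (auto simp: P_def)
    then have "P (Least P)" "Least P \<le> Suc i"
      by (auto intro: LeastI Least_le order_trans)
    then have "bjs_invariant (Suc i) (p(Suc i := Least P))"
      using bjs_invariant_upd[OF inv] False by (simp add: P_def)
    moreover have "bjs_aux V n (Suc i) = p(Suc i := Least P)"
      using False by (force simp: p_def P_def Let_def)
    ultimately show ?thesis by (simp only:)
  qed
qed

lemma bjs_bij: "bij_betw (bjs_aux V n n) {1..n} {1..n}"
proof -
  have "inj_on (bjs_aux V n n) {1..n}" "bjs_aux V n n ` {1..n} \<subseteq> {1..n}"
    using bjs_aux_invariant[of n] by (auto simp: bjs_invariant_def)
  then show ?thesis
    by (simp add: bij_betw_def card_image card_subset_eq)
qed

theorem no_valley_row_iff_inv_ge: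
  assumes k: "k \<in> {1..n}"
  shows "k \<notin> snd ` V \<longleftrightarrow> k \<le> inv_into {1..n} (bjs_aux V n n) k"
proof -
  let ?p = "bjs_aux V n n"
  define m where "m = inv_into {1..n} ?p k"
  have inv: "bjs_invariant n ?p" by (rule bjs_aux_invariant) simp
  have m: "m \<in> {1..n}" "?p m = k"
    using bij_betw_inv_into_right[OF bjs_bij k] bij_betw_apply[OF bij_betw_inv_into[OF bjs_bij] k]
    by (simp_all add: m_def)
  show ?thesis unfolding m_def[symmetric]
  proof
    assume "k \<notin> snd ` V"
    then have "m \<notin> fst ` V" using bjs_invariant_column(1)[OF inv m(1)] m(2) by force
    then show "k \<le> m" using bjs_invariant_column(2)[OF inv m(1)] m(2) by simp
  next
    assume "k \<le> m"
    show "k \<notin> snd ` V"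
    proof
      assume "k \<in> snd ` V"
      then obtain c where c: "(c, k) \<in> V" by force
      then have "c \<in> {1..n}" "c < k" using cell_bounds[OF c] by auto
      have "c \<in> fst ` V" using c by force
      then have "?p c = k"
        using bjs_invariant_column(1)[OF inv \<open>c \<in> {1..n}\<close>] c same_column by blast
      then have "m = c"
        using bij_betw_inv_into_left[OF bjs_bij \<open>c \<in> {1..n}\<close>] by (simp add: m_def)
      with \<open>k \<le> m\<close> \<open>c < k\<close> show False by simp
    qed
  qed
qed

end

lemma valley_matching_valleys:
  assumes "dyck n w"
  shows "valley_matching n (valleys w)"
proof
  fix c r assume "(c, r) \<in> valleys w"
  then obtain i where "is_valley w i" "valley_cell w i = (c, r)"
    by (auto simp: valleys_eq_image)
  then show "1 \<le> c \<and> c < r \<and> r \<le> n"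
    using valley_cell_bounds[OF assms] by fastforce
next
  fix c r r' assume "(c, r) \<in> valleys w" "(c, r') \<in> valleys w"
  then obtain i i' where "is_valley w i" "valley_cell w i = (c, r)"
    and "is_valley w i'" "valley_cell w i' = (c, r')"
    by (auto simp: valleys_eq_image)
  then show "r = r'"
    using valley_cell_inj[of w i i'] by auto
next
  fix c c' r assume "(c, r) \<in> valleys w" "(c', r) \<in> valleys w"
  then obtain i i' where "is_valley w i" "valley_cell w i = (c, r)"
    and "is_valley w i'" "valley_cell w i' = (c', r)"
    by (auto simp: valleys_eq_image)
  then show "c = c'"
    using valley_cell_inj[of w i i'] by auto
qed

theorem mainTheorem5:
  fixes n :: nat and w :: "bool list" and k :: nat
  assumes "dyck n w" and "k \<in> {1..n}"
  shows "(k \<in> no_valley_rows n w \<longleftrightarrow> inv_into {1..n} (bjs n w) k \<ge> k) \<and>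
         (k \<in> no_valley_rows n w \<longleftrightarrow>
            fixpoint (bjs n w) (inv_into {1..n} (bjs n w) k) \<or>
            deficiency (bjs n w) (inv_into {1..n} (bjs n w) k))"
proof -
  interpret valley_matching n "valleys w"
    using assms(1) by (rule valley_matching_valleys)
  let ?m = "inv_into {1..n} (bjs n w) k"
  have "k \<in> no_valley_rows n w \<longleftrightarrow> k \<notin> snd ` valleys w"
    using assms(2) by (force simp: no_valley_rows_def)
  also have "\<dots> \<longleftrightarrow> k \<le> ?m"
    using no_valley_row_iff_inv_ge[OF assms(2)] by (simp add: bjs_def)
  finally have N: "k \<in> no_valley_rows n w \<longleftrightarrow> k \<le> ?m" .
  have "bjs n w ?m = k"
    using bij_betw_inv_into_right[OF bjs_bij assms(2)] by (simp add: bjs_def)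
  with N show ?thesis
    by (auto simp: fixpoint_def deficiency_def)
qed

end
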